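(* Let $p\in(1,\infty)$, let $X_1,X_2$ be Banach spaces, $X=X_1\oplus_p X_2$, and $k\in\mathbb{N}$. For every $\varepsilon>0$ and every Lipschitz map $h=(f,g):([\mathbb{N}]^k,d_{\mathbb{H}})\to X$ (with $f:[\mathbb{N}]^k\to X_1$, $g:[\mathbb{N}]^k\to X_2$), there exists $\mathbb{M}\in[\mathbb{N}]^\omega$ such that for every $1\le j\le k$, $$\operatorname{Lip}_j(f_{|[\mathbb{M}]^k})^p+\operatorname{Lip}_j(g_{|[\mathbb{M}]^k})^p\le\operatorname{Lip}_j(h)^p+\varepsilon.$$
   Context: $X_1\oplus_p X_2$ is $X_1\times X_2$ with norm $\|(x_1,x_2)\|=(\|x_1\|^p+\|x_2\|^p)^{1/p}$. For $\mathbb{M}\subset\mathbb{N}$ infinite, $[\mathbb{M}]^k=\{(n_1,\dots,n_k)\in\mathbb{M}^k:n_1<\cdots<n_k\}$ with Hamming distance $d_{\mathbb{H}}(\overline{n},\overline{m})=|\{j:n_j\ne m_j\}|$; $[\mathbb{N}]^\omega$ is the set of infinite subsets of $\mathbb{N}$. $H_j(\mathbb{M})=\{(\overline{n},\overline{m})\in[\mathbb{M}]^k\times[\mathbb{M}]^k: n_i=m_i\ \forall i\ne j,\ n_j<m_j\}$. For $F$ defined on $[\mathbb{M}]^k$ with values in a normed space, $\operatorname{Lip}_j(F)=\sup_{(\overline{n},\overline{m})\in H_j(\mathbb{M})}\|F(\overline{n})-F(\overline{m})\|$; in particular $\operatorname{Lip}_j(h)$ is the supremum over $H_j(\mathbb{N})$.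 *)

theory Defs
  imports "HOL-Analysis.Analysis"
begin

definition kset :: "nat set \<Rightarrow> nat \<Rightarrow> nat list set" where
  "kset M k = {n. length n = k \<and> sorted_wrt (<) n \<and> set n \<subseteq> M}"

definition hamming :: "nat list \<Rightarrow> nat list \<Rightarrow> nat" where
  "hamming n m = card {i. i < length n \<and> n ! i \<noteq> m ! i}"

text \<open>H_j(M), with 0-based coordinate index j (j < k corresponds to 1 \<le> j+1 \<le> k).\<close>
definition Hj :: "nat set \<Rightarrow> nat \<Rightarrow> nat \<Rightarrow> (nat list \<times> nat list) set" where
  "Hj M k j = {(n, m). n \<in> kset M k \<and> m \<in> kset M k \<and>
      (\<forall>i<k. i \<noteq> j \<longrightarrow> n ! i = m ! i) \<and> n ! j < m ! j}"

definition lipj :: "('v \<Rightarrow> real) \<Rightarrow> nat set \<Rightarrow> nat \<Rightarrow> nat \<Rightarrow> (nat list \<Rightarrow> 'v::ab_group_add) \<Rightarrow> real" where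
  "lipj nrm M k j F = (SUP nm \<in> Hj M k j. nrm (F (fst nm) - F (snd nm)))"

definition pnorm :: "real \<Rightarrow> ('a::real_normed_vector \<times> 'b::real_normed_vector) \<Rightarrow> real" where
  "pnorm p x = (norm (fst x) powr p + norm (snd x) powr p) powr (1 / p)"

definition lipschitz_H :: "('v \<Rightarrow> real) \<Rightarrow> nat \<Rightarrow> (nat list \<Rightarrow> 'v::ab_group_add) \<Rightarrow> bool" where
  "lipschitz_H nrm k F \<longleftrightarrow> (\<exists>C. \<forall>n\<in>kset UNIV k. \<forall>m\<in>kset UNIV k.
      nrm (F n - F m) \<le> C * real (hamming n m))"

end

theory Submission
  imports Defs "HOL-Library.Ramsey"
begin

text \<open>A pair \<open>(n, m) \<in> H\<^sub>j(M)\<close> is determined by the \<open>(k+1)\<close>-set \<open>set n \<union> set m\<close>: its increasing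
  enumeration is \<open>n\<^sub>0 < \<dots> < n\<^sub>j < m\<^sub>j < \<dots> < m\<^sub>k\<^sub>-\<^sub>1\<close>, and \<open>n\<close>, \<open>m\<close> are recovered by deleting its
  entry number \<open>j+1\<close>, resp. \<open>j\<close>. Colouring \<open>(k+1)\<close>-sets by the discretised values of
  \<open>\<parallel>f n - f m\<parallel>\<close> and \<open>\<parallel>g n - g m\<parallel>\<close>, Ramsey's theorem gives an infinite \<open>M\<close> on which these norms
  vary by less than \<open>\<delta>\<close> over each \<open>H\<^sub>j(M)\<close>. Hence \<open>Lip\<^sub>j(f|M)\<close> and \<open>Lip\<^sub>j(g|M)\<close> are within \<open>\<delta>\<close> of
  the values \<open>a\<close>, \<open>b\<close> at one pair \<open>(n\<^sub>0, m\<^sub>0)\<close>, while \<open>a\<^sup>p + b\<^sup>p = \<parallel>h n\<^sub>0 - h m\<^sub>0\<parallel>\<^sup>p \<le> Lip\<^sub>j(h)\<^sup>p\<close>;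
  uniform continuity of \<open>t \<mapsto> t\<^sup>p\<close> on a bounded interval turns \<open>\<delta>\<close> into \<open>\<epsilon>\<close>.\<close>

lemma Ramsey_small_oscillation:
  fixes \<psi> :: "'a set \<Rightarrow> real"
  assumes Z: "infinite Z" and \<delta>: "\<delta> > 0" and bounded: "\<psi> ` [Z]\<^bsup>r\<^esup> \<subseteq> {0..B}"
  obtains Y where "Y \<subseteq> Z" "infinite Y" "\<And>X X'. X \<in> [Y]\<^bsup>r\<^esup> \<Longrightarrow> X' \<in> [Y]\<^bsup>r\<^esup> \<Longrightarrow> \<psi> X < \<psi> X' + \<delta>"
proof -
  define colour where "colour X = nat \<lfloor>\<psi> X / \<delta>\<rfloor>" for X
  have "colour ` [Z]\<^bsup>r\<^esup> \<subseteq> {..<Suc (nat \<lfloor>B / \<delta>\<rfloor>)}"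
  proof (intro image_subsetI)
    fix X assume "X \<in> [Z]\<^bsup>r\<^esup>"
    with bounded have "\<psi> X \<le> B" by auto
    with \<delta> have "\<lfloor>\<psi> X / \<delta>\<rfloor> \<le> \<lfloor>B / \<delta>\<rfloor>" by (intro floor_mono divide_right_mono) auto
    then show "colour X \<in> {..<Suc (nat \<lfloor>B / \<delta>\<rfloor>)}" by (simp add: colour_def)
  qed
  then obtain Y t where Y: "Y \<subseteq> Z" "infinite Y" and t: "colour ` [Y]\<^bsup>r\<^esup> \<subseteq> {t}"
    by (rule Ramsey_nsets[OF Z])
  have \<psi>_in: "\<psi> X \<in> {t * \<delta> ..< t * \<delta> + \<delta>}" if "X \<in> [Y]\<^bsup>r\<^esup>" for X
  proof -
    have "X \<in> [Z]\<^bsup>r\<^esup>" using that nsets_mono[OF Y(1)] by blast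
    with bounded have "0 \<le> \<psi> X" by auto
    moreover have "nat \<lfloor>\<psi> X / \<delta>\<rfloor> = t" using t that by (auto simp: colour_def)
    ultimately have "\<lfloor>\<psi> X / \<delta>\<rfloor> = int t" using \<delta> by auto
    then have "real t \<le> \<psi> X / \<delta>" "\<psi> X / \<delta> < real t + 1" by linarith+
    with \<delta> show ?thesis by (simp add: field_simps)
  qed
  show thesis
  proof (rule that[OF Y])
    fix X X' assume "X \<in> [Y]\<^bsup>r\<^esup>" "X' \<in> [Y]\<^bsup>r\<^esup>"
    from \<psi>_in[OF this(1)] \<psi>_in[OF this(2)] show "\<psi> X < \<psi> X' + \<delta>" by simp
  qed
qed

lemma Ramsey_small_oscillation_finite:
  fixes \<psi> :: "'i \<Rightarrow> 'a set \<Rightarrow> real"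
  assumes "finite I" "infinite Z" "\<delta> > 0" "\<And>i. i \<in> I \<Longrightarrow> \<psi> i ` [Z]\<^bsup>r\<^esup> \<subseteq> {0..B}"
  shows "\<exists>Y\<subseteq>Z. infinite Y \<and> (\<forall>i\<in>I. \<forall>X\<in>[Y]\<^bsup>r\<^esup>. \<forall>X'\<in>[Y]\<^bsup>r\<^esup>. \<psi> i X < \<psi> i X' + \<delta>)"
  using assms(1,2,4)
proof (induction I arbitrary: Z rule: finite_induct)
  case empty
  then show ?case by blast
next
  case (insert i I)
  obtain Y1 where Y1: "Y1 \<subseteq> Z" "infinite Y1"
    and osc1: "\<forall>i\<in>I. \<forall>X\<in>[Y1]\<^bsup>r\<^esup>. \<forall>X'\<in>[Y1]\<^bsup>r\<^esup>. \<psi> i X < \<psi> i X' + \<delta>"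
    using insert.IH[OF insert.prems(1)] insert.prems(2) by blast
  have "\<psi> i ` [Y1]\<^bsup>r\<^esup> \<subseteq> {0..B}"
    using insert.prems(2) nsets_mono[OF Y1(1)] by blast
  then obtain Y where "Y \<subseteq> Y1" "infinite Y"
    and "\<And>X X'. X \<in> [Y]\<^bsup>r\<^esup> \<Longrightarrow> X' \<in> [Y]\<^bsup>r\<^esup> \<Longrightarrow> \<psi> i X < \<psi> i X' + \<delta>"
    using Ramsey_small_oscillation[OF Y1(2) assms(3)] by blast
  moreover have "[Y]\<^bsup>r\<^esup> \<subseteq> [Y1]\<^bsup>r\<^esup>" using \<open>Y \<subseteq> Y1\<close> by (rule nsets_mono)
  ultimately show ?case using Y1 osc1 by (intro exI[of _ Y]) (auto simp: subset_iff)
qed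

definition remove_nth :: "nat \<Rightarrow> 'a list \<Rightarrow> 'a list" where
  "remove_nth i xs = take i xs @ drop (Suc i) xs"

lemma length_remove_nth: "i < length xs \<Longrightarrow> length (remove_nth i xs) = length xs - 1"
  by (simp add: remove_nth_def)

lemma set_remove_nth_subset: "set (remove_nth i xs) \<subseteq> set xs"
  by (auto simp: remove_nth_def dest: in_set_takeD in_set_dropD)

lemma nth_remove_nth:
  "a < length xs - 1 \<Longrightarrow> i < length xs \<Longrightarrow> remove_nth i xs ! a = xs ! (if a < i then a else Suc a)"
  by (simp add: remove_nth_def nth_append)

lemma sorted_wrt_remove_nth: "sorted_wrt R xs \<Longrightarrow> sorted_wrt R (remove_nth i xs)"
proof -
  assume "sorted_wrt R xs"
  then have "sorted_wrt R (take i xs @ drop i xs)" by simp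
  then show ?thesis
    unfolding remove_nth_def sorted_wrt_append
    using set_drop_subset_set_drop[of i "Suc i" xs] sorted_wrt_drop[OF \<open>sorted_wrt R xs\<close>] by auto
qed

lemma remove_nth_in_kset: "xs \<in> kset M (Suc k) \<Longrightarrow> i \<le> k \<Longrightarrow> remove_nth i xs \<in> kset M k"
  using set_remove_nth_subset[of i xs]
  by (auto simp: kset_def length_remove_nth sorted_wrt_remove_nth)

lemma sorted_list_of_set_in_kset: "X \<in> [M]\<^bsup>r\<^esup> \<Longrightarrow> sorted_list_of_set X \<in> kset M r"
  by (auto simp: kset_def nsets_def)

lemma remove_nth_pair_in_Hj:
  assumes xs: "xs \<in> kset M (Suc k)" and j: "j < k"
  shows "(remove_nth (Suc j) xs, remove_nth j xs) \<in> Hj M k j"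
proof -
  have len: "length xs = Suc k" and sorted: "sorted_wrt (<) xs" using xs by (auto simp: kset_def)
  have "xs ! j < xs ! Suc j" using sorted len j by (simp add: sorted_wrt_nth_less)
  then show ?thesis
    using remove_nth_in_kset[OF xs] j len by (auto simp: Hj_def nth_remove_nth)
qed

lemma Hj_nonempty:
  assumes "infinite M" "j < k"
  shows "Hj M k j \<noteq> {}"
proof -
  obtain X where "X \<in> [M]\<^bsup>Suc k\<^esup>"
    using infinite_arbitrarily_large[OF assms(1)] by (auto simp: nsets_def)
  then show ?thesis
    using remove_nth_pair_in_Hj[OF sorted_list_of_set_in_kset assms(2)] by blast
qed

lemma Hj_mono: "M \<subseteq> M' \<Longrightarrow> Hj M k j \<subseteq> Hj M' k j"
  by (auto simp: Hj_def kset_def)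

lemma Hj_kset: "(n, m) \<in> Hj M k j \<Longrightarrow> n \<in> kset UNIV k \<and> m \<in> kset UNIV k"
  by (simp add: Hj_def kset_def)

lemma Hj_take_drop:
  assumes "(n, m) \<in> Hj M k j"
  shows "take j m = take j n" "drop (Suc j) m = drop (Suc j) n"
  using assms by (auto simp: Hj_def kset_def intro!: nth_equalityI)

lemma sorted_list_of_set_Hj:
  assumes H: "(n, m) \<in> Hj M k j" and j: "j < k"
  shows "sorted_list_of_set (set n \<union> set m) = take (Suc j) n @ drop j m"
proof -
  define l where "l = take (Suc j) n @ drop j m"
  have len: "length n = k" "length m = k" and sorted: "sorted_wrt (<) n" "sorted_wrt (<) m"
    and jj: "n ! j < m ! j" using H by (auto simp: Hj_def kset_def)
  have "set n = set (take (Suc j) n) \<union> set (drop (Suc j) m)"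
    using Hj_take_drop(2)[OF H] by (metis append_take_drop_id set_append)
  moreover have "set m = set (take j n) \<union> set (drop j m)"
    using Hj_take_drop(1)[OF H] by (metis append_take_drop_id set_append)
  ultimately have set_l: "set l = set n \<union> set m"
    using set_take_subset_set_take[of j "Suc j" n] set_drop_subset_set_drop[of j "Suc j" m]
    by (auto simp: l_def)
  have "x < y" if x: "x \<in> set (take (Suc j) n)" and y: "y \<in> set (drop j m)" for x y
  proof -
    obtain a where "a < length (take (Suc j) n)" "x = take (Suc j) n ! a"
      using x by (metis in_set_conv_nth)
    then have a: "a \<le> j" "x = n ! a" by auto
    obtain b where "b < length (drop j m)" "y = drop j m ! b"
      using y by (metis in_set_conv_nth)
    then have b: "j \<le> j + b" "j + b < k" "y = m ! (j + b)" using len by auto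
    have "x \<le> n ! j" using a sorted(1) j len by (simp add: strict_sorted_iff sorted_nth_mono)
    moreover have "m ! j \<le> y" using b sorted(2) len by (simp add: strict_sorted_iff sorted_nth_mono)
    ultimately show ?thesis using jj by simp
  qed
  then have "sorted_wrt (<) l" using sorted by (simp add: l_def sorted_wrt_append)
  then have "sorted_list_of_set (set l) = l"
    by (simp add: sorted_list_of_set_sort_remdups strict_sorted_iff distinct_remdups_id sorted_sort_id)
  then show ?thesis using set_l by (simp add: l_def)
qed

lemma Hj_encode:
  assumes H: "(n, m) \<in> Hj M k j" and j: "j < k"
  shows "set n \<union> set m \<in> [M]\<^bsup>Suc k\<^esup>"
    and "remove_nth (Suc j) (sorted_list_of_set (set n \<union> set m)) = n"
    and "remove_nth j (sorted_list_of_set (set n \<union> set m)) = m"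
proof -
  have len: "length n = k" "length m = k" and sub: "set n \<subseteq> M" "set m \<subseteq> M"
    using H by (auto simp: Hj_def kset_def)
  note sl = sorted_list_of_set_Hj[OF H j]
  have "card (set n \<union> set m) = length (take (Suc j) n @ drop j m)"
    by (metis sl finite_Un List.finite_set length_sorted_list_of_set)
  then show "set n \<union> set m \<in> [M]\<^bsup>Suc k\<^esup>"
    using sub len j by (simp add: nsets_def)
  show "remove_nth (Suc j) (sorted_list_of_set (set n \<union> set m)) = n"
    using Hj_take_drop(2)[OF H] len j by (simp add: sl remove_nth_def)
  show "remove_nth j (sorted_list_of_set (set n \<union> set m)) = m"
    using Hj_take_drop(1)[OF H, symmetric] len j by (simp add: sl remove_nth_def)
qed

lemma Hj_small_oscillation:
  fixes \<phi> :: "nat list \<Rightarrow> nat list \<Rightarrow> real"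
  assumes Z: "infinite Z" and \<delta>: "\<delta> > 0"
    and bounded: "\<forall>n\<in>kset UNIV k. \<forall>m\<in>kset UNIV k. \<phi> n m \<in> {0..B}"
  obtains M where "M \<subseteq> Z" "infinite M"
    "\<And>j n m n' m'. j < k \<Longrightarrow> (n, m) \<in> Hj M k j \<Longrightarrow> (n', m') \<in> Hj M k j \<Longrightarrow>
      \<phi> n m < \<phi> n' m' + \<delta>"
proof -
  define \<psi> where "\<psi> j X = \<phi> (remove_nth (Suc j) (sorted_list_of_set X)) (remove_nth j (sorted_list_of_set X))"
    for j X
  have "\<psi> j ` [Z]\<^bsup>Suc k\<^esup> \<subseteq> {0..B}" if "j \<in> {..<k}" for j
  proof (intro image_subsetI)
    fix X assume "X \<in> [Z]\<^bsup>Suc k\<^esup>"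
    then have "sorted_list_of_set X \<in> kset UNIV (Suc k)"
      using nsets_mono[of Z UNIV] sorted_list_of_set_in_kset by blast
    then show "\<psi> j X \<in> {0..B}"
      using that bounded remove_nth_in_kset by (simp add: \<psi>_def)
  qed
  then obtain M where M: "M \<subseteq> Z" "infinite M"
    and osc: "\<forall>j\<in>{..<k}. \<forall>X\<in>[M]\<^bsup>Suc k\<^esup>. \<forall>X'\<in>[M]\<^bsup>Suc k\<^esup>. \<psi> j X < \<psi> j X' + \<delta>"
    using Ramsey_small_oscillation_finite[of "{..<k}" Z \<delta> \<psi> "Suc k" B] Z \<delta> by auto
  show thesis
  proof (rule that[OF M])
    fix j n m n' m'
    assume j: "j < k" and H: "(n, m) \<in> Hj M k j" and H': "(n', m') \<in> Hj M k j"
    have "\<psi> j (set n \<union> set m) < \<psi> j (set n' \<union> set m') + \<delta>"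
      using osc j Hj_encode(1)[OF H j] Hj_encode(1)[OF H' j] by blast
    then show "\<phi> n m < \<phi> n' m' + \<delta>"
      by (simp add: \<psi>_def Hj_encode(2,3)[OF H j] Hj_encode(2,3)[OF H' j])
  qed
qed

lemma lipj_le:
  assumes "Hj M k j \<noteq> {}" "\<And>n m. (n, m) \<in> Hj M k j \<Longrightarrow> nrm (F n - F m) \<le> c"
  shows "lipj nrm M k j F \<le> c"
  unfolding lipj_def using assms by (intro cSUP_least) auto

lemma lipj_ge:
  assumes "(n, m) \<in> Hj M k j" "\<And>n m. (n, m) \<in> Hj M k j \<Longrightarrow> nrm (F n - F m) \<le> B"
  shows "nrm (F n - F m) \<le> lipj nrm M k j F"
  unfolding lipj_def using assms
  by (intro cSUP_upper2[where x="(n, m)"] bdd_aboveI2[where M=B]) auto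

lemma lipschitz_H_bounded:
  assumes "lipschitz_H nrm k F"
  obtains B where "\<And>n m. n \<in> kset UNIV k \<Longrightarrow> m \<in> kset UNIV k \<Longrightarrow> nrm (F n - F m) \<le> B"
proof -
  obtain C where C: "\<And>n m. n \<in> kset UNIV k \<Longrightarrow> m \<in> kset UNIV k \<Longrightarrow> nrm (F n - F m) \<le> C * real (hamming n m)"
    using assms unfolding lipschitz_H_def by blast
  have "C * real (hamming n m) \<le> \<bar>C\<bar> * real k" if "n \<in> kset UNIV k" for n m
  proof -
    have "hamming n m \<le> k"
      using that card_mono[of "{..<k}" "{i. i < length n \<and> n ! i \<noteq> m ! i}"]
      by (auto simp: hamming_def kset_def)
    have "C * real (hamming n m) \<le> \<bar>C\<bar> * real (hamming n m)" by (simp add: mult_right_mono)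
    also have "\<dots> \<le> \<bar>C\<bar> * real k" using \<open>hamming n m \<le> k\<close> by (simp add: mult_left_mono)
    finally show ?thesis .
  qed
  with C show thesis by (intro that[of "\<bar>C\<bar> * real k"]) (meson order_trans)
qed

lemma pnorm_powr: "p > 0 \<Longrightarrow> pnorm p x powr p = norm (fst x) powr p + norm (snd x) powr p"
  by (simp add: pnorm_def powr_powr)

lemma norm_le_pnorm:
  assumes "p > 0"
  shows "norm (fst x) \<le> pnorm p x" and "norm (snd x) \<le> pnorm p x"
proof -
  have le: "t \<le> (t powr p + s powr p) powr (1 / p)" if "t \<ge> 0" for t s :: real
  proof -
    have "t = (t powr p) powr (1 / p)" using that assms by (simp add: powr_powr)
    also have "\<dots> \<le> (t powr p + s powr p) powr (1 / p)" using assms by (intro powr_mono2) auto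
    finally show ?thesis .
  qed
  show "norm (fst x) \<le> pnorm p x" "norm (snd x) \<le> pnorm p x"
    using le[of "norm (fst x)" "norm (snd x)"] le[of "norm (snd x)" "norm (fst x)"]
    by (simp_all add: pnorm_def add.commute)
qed

lemma uniform_powr_increment:
  fixes p B e :: real
  assumes p: "0 < p" and e: "0 < e"
  obtains \<delta> where "\<delta> > 0" "\<And>x. x \<in> {0..B} \<Longrightarrow> (x + \<delta>) powr p \<le> x powr p + e"
proof -
  have "uniformly_continuous_on {0..B + 1} (\<lambda>x::real. x powr p)"
    using p by (intro compact_uniformly_continuous continuous_on_powr' continuous_intros) auto
  then obtain \<delta>0 where \<delta>0: "\<delta>0 > 0" and uc: "\<forall>x\<in>{0..B + 1}. \<forall>x'\<in>{0..B + 1}.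
      dist x' x < \<delta>0 \<longrightarrow> dist (x' powr p) (x powr p) < e"
    using e unfolding uniformly_continuous_on_def by blast
  define \<delta> where "\<delta> = min (\<delta>0 / 2) 1"
  show thesis
  proof (rule that[of \<delta>])
    show "\<delta> > 0" using \<delta>0 by (simp add: \<delta>_def)
    fix x :: real assume "x \<in> {0..B}"
    then have "dist ((x + \<delta>) powr p) (x powr p) < e"
      using uc \<delta>0 by (auto simp: \<delta>_def dist_real_def)
    then show "(x + \<delta>) powr p \<le> x powr p + e" by (simp add: dist_real_def)
  qed
qed

lemma lipj_powr_le:
  fixes F :: "nat list \<Rightarrow> 'v::real_normed_vector"
  assumes H0: "(n0, m0) \<in> Hj M k j"
    and osc: "\<And>n m. (n, m) \<in> Hj M k j \<Longrightarrow> norm (F n - F m) < norm (F n0 - F m0) + \<delta>"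
    and B: "norm (F n0 - F m0) \<le> B" and inc: "\<And>x. x \<in> {0..B} \<Longrightarrow> (x + \<delta>) powr p \<le> x powr p + e"
    and p: "0 \<le> p"
  shows "lipj norm M k j F powr p \<le> norm (F n0 - F m0) powr p + e"
proof -
  let ?a = "norm (F n0 - F m0)"
  have "?a \<le> lipj norm M k j F"
    using H0 osc by (intro lipj_ge[where B="?a + \<delta>"]) (auto intro: less_imp_le)
  moreover have "lipj norm M k j F \<le> ?a + \<delta>"
    using H0 osc by (intro lipj_le) (auto intro: less_imp_le)
  moreover have "0 \<le> ?a" by simp
  ultimately have "lipj norm M k j F powr p \<le> (?a + \<delta>) powr p"
    using p by (intro powr_mono2; linarith)
  also have "\<dots> \<le> ?a powr p + e" using inc B by simp
  finally show ?thesis .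
qed

lemma lipj_components_powr_le:
  fixes f :: "nat list \<Rightarrow> 'a::real_normed_vector" and g :: "nat list \<Rightarrow> 'b::real_normed_vector"
  assumes H0: "(n0, m0) \<in> Hj M k j" and p: "0 < p"
    and osc_f: "\<And>n m. (n, m) \<in> Hj M k j \<Longrightarrow> norm (f n - f m) < norm (f n0 - f m0) + \<delta>"
    and osc_g: "\<And>n m. (n, m) \<in> Hj M k j \<Longrightarrow> norm (g n - g m) < norm (g n0 - g m0) + \<delta>"
    and B: "\<And>n m. n \<in> kset UNIV k \<Longrightarrow> m \<in> kset UNIV k \<Longrightarrow> pnorm p ((f n, g n) - (f m, g m)) \<le> B"
    and inc: "\<And>x. x \<in> {0..B} \<Longrightarrow> (x + \<delta>) powr p \<le> x powr p + e"
  shows "lipj norm M k j f powr p + lipj norm M k j g powr p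
    \<le> lipj (pnorm p) UNIV k j (\<lambda>n. (f n, g n)) powr p + 2 * e"
proof -
  let ?h = "\<lambda>n. (f n, g n)"
  have "pnorm p (?h n0 - ?h m0) \<le> B" using B Hj_kset[OF H0] by blast
  then have "norm (f n0 - f m0) \<le> B" "norm (g n0 - g m0) \<le> B"
    using norm_le_pnorm[OF p, of "?h n0 - ?h m0"] by auto
  then have "lipj norm M k j f powr p \<le> norm (f n0 - f m0) powr p + e"
    and "lipj norm M k j g powr p \<le> norm (g n0 - g m0) powr p + e"
    using p by (auto intro!: lipj_powr_le[OF H0 osc_f _ inc] lipj_powr_le[OF H0 osc_g _ inc])
  moreover have "pnorm p (?h n0 - ?h m0) \<le> lipj (pnorm p) UNIV k j ?h"
  proof (rule lipj_ge[where F="?h"])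
    show "(n0, m0) \<in> Hj UNIV k j" using Hj_mono[of M UNIV] H0 by blast
    show "pnorm p (?h n - ?h m) \<le> B" if "(n, m) \<in> Hj UNIV k j" for n m
      using B Hj_kset[OF that] by blast
  qed
  then have "pnorm p (?h n0 - ?h m0) powr p \<le> lipj (pnorm p) UNIV k j ?h powr p"
    using p by (intro powr_mono2) (auto simp: pnorm_def)
  ultimately show ?thesis using pnorm_powr[OF p, of "?h n0 - ?h m0"] by simp
qed

theorem mainTheorem2:
  fixes p :: real and k :: nat and \<epsilon> :: real
    and f :: "nat list \<Rightarrow> 'a::banach" and g :: "nat list \<Rightarrow> 'b::banach"
  assumes "1 < p" and "\<epsilon> > 0"
    and "lipschitz_H (pnorm p) k (\<lambda>n. (f n, g n))"
  shows "\<exists>M. infinite M \<and> (\<forall>j<k.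
      lipj norm M k j f powr p + lipj norm M k j g powr p
        \<le> lipj (pnorm p) UNIV k j (\<lambda>n. (f n, g n)) powr p + \<epsilon>)"
proof -
  have p: "0 < p" using assms(1) by simp
  obtain B where B: "\<And>n m. n \<in> kset UNIV k \<Longrightarrow> m \<in> kset UNIV k \<Longrightarrow>
      pnorm p ((f n, g n) - (f m, g m)) \<le> B"
    using lipschitz_H_bounded[OF assms(3)] by blast
  have "norm (f n - f m) \<in> {0..B} \<and> norm (g n - g m) \<in> {0..B}"
    if "n \<in> kset UNIV k" "m \<in> kset UNIV k" for n m
    using norm_le_pnorm[OF p, of "(f n, g n) - (f m, g m)"] B[OF that] by auto
  then have Bf: "\<forall>n\<in>kset UNIV k. \<forall>m\<in>kset UNIV k. norm (f n - f m) \<in> {0..B}"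
    and Bg: "\<forall>n\<in>kset UNIV k. \<forall>m\<in>kset UNIV k. norm (g n - g m) \<in> {0..B}"
    by auto
  obtain \<delta> where \<delta>: "\<delta> > 0" and inc: "\<And>x. x \<in> {0..B} \<Longrightarrow> (x + \<delta>) powr p \<le> x powr p + \<epsilon> / 2"
    using uniform_powr_increment[OF p, of "\<epsilon> / 2" B] assms(2) by auto
  obtain M1 where M1: "infinite M1" and osc_f: "\<And>j n m n' m'. j < k \<Longrightarrow> (n, m) \<in> Hj M1 k j \<Longrightarrow>
      (n', m') \<in> Hj M1 k j \<Longrightarrow> norm (f n - f m) < norm (f n' - f m') + \<delta>"
    by (rule Hj_small_oscillation[OF infinite_UNIV_nat \<delta> Bf]) (rule that)
  obtain M where M: "M \<subseteq> M1" "infinite M" and osc_g: "\<And>j n m n' m'. j < k \<Longrightarrow> (n, m) \<in> Hj M k j \<Longrightarrow>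
      (n', m') \<in> Hj M k j \<Longrightarrow> norm (g n - g m) < norm (g n' - g m') + \<delta>"
    by (rule Hj_small_oscillation[OF M1 \<delta> Bg]) (rule that)
  have "lipj norm M k j f powr p + lipj norm M k j g powr p
      \<le> lipj (pnorm p) UNIV k j (\<lambda>n. (f n, g n)) powr p + \<epsilon>" if j: "j < k" for j
  proof -
    obtain n0 m0 where H0: "(n0, m0) \<in> Hj M k j" using Hj_nonempty[OF M(2) j] by auto
    have HM1: "Hj M k j \<subseteq> Hj M1 k j" by (rule Hj_mono[OF M(1)])
    have "norm (f n - f m) < norm (f n0 - f m0) + \<delta>" if "(n, m) \<in> Hj M k j" for n m
      using osc_f[OF j subsetD[OF HM1 that] subsetD[OF HM1 H0]] .
    from lipj_components_powr_le[OF H0 p this osc_g[OF j _ H0] B inc] show ?thesis by simp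
  qed
  with M(2) show ?thesis by blast
qed

end
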